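(* Let $x\in(0,1)$ be irrational with regular continued fraction $x=[0;d_1,d_2,\dots]$, and let $\tau=G^2(x)=[0;d_3,d_4,\dots]$. Then: (i) if $d_1$ is odd and $\tau\in[\frac12,1)$, the OOCF expansion of $x$ begins with $(2,-1)$ repeated $\frac{d_1-1}{2}$ times followed by $(d_2+1,1)$, and $T^{\frac{d_1-1}{2}+1}(x)=F(\tau)$; (ii) if $d_1$ is odd and $\tau\in[0,\frac12)$, the OOCF expansion of $x$ begins with $(2,-1)$ repeated $\frac{d_1-1}{2}$ times followed by $(d_2+2,-1)$, and $T^{\frac{d_1-1}{2}+1}(x)=F(\tau)$; (iii) if $d_1$ is even, the OOCF expansion of $x$ begins with $(2,-1)$ repeated $\frac{d_1}{2}-1$ times followed by $(1,1)$, and $T^{\frac{d_1}{2}}(x)=G(x)$.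
   Context: $[0;d_1,d_2,\dots]=\cfrac{1}{d_1+\cfrac{1}{d_2+\cdots}}$ is the regular continued fraction. Gauss map $G(x)=\{1/x\}$ (fractional part) for $x\in(0,1]$, $G(0)=0$. Farey map $F(x)=\frac{x}{1-x}$ for $0\le x\le\frac12$, $F(x)=\frac{1-x}{x}$ for $\frac12\le x\le1$. OOCF: digits $D=\{(1,1)\}\cup\{(a,\varepsilon):a\ge2,\ \varepsilon=\pm1\}$; $B(k+1,-1)=[\frac{k-1}{k},\frac{2k-1}{2k+1}]$, $B(k,1)=[\frac{2k-1}{2k+1},\frac{k}{k+1}]$ ($k\ge1$); the OOCF map is $T(x)=\frac{kx-(k-1)}{k-(k+1)x}$ on $B(k+1,-1)$, $T(x)=\frac{k-(k+1)x}{kx-(k-1)}$ on $B(k,1)$, $T(1)=1$. The OOCF expansion of irrational $x\in(0,1)$ is the unique sequence $(a_n,\varepsilon_n)\in D$ with $T^{n-1}(x)\in B(a_n,\varepsilon_n)$ for all $n\ge1$. *)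

theory Defs
  imports Complex_Main
begin

definition gauss_map :: "real \<Rightarrow> real" where
  "gauss_map x = (if x = 0 then 0 else frac (1 / x))"

definition farey_map :: "real \<Rightarrow> real" where
  "farey_map x = (if x \<le> 1/2 then x / (1 - x) else (1 - x) / x)"

definition cf_digit :: "real \<Rightarrow> nat \<Rightarrow> nat" where
  "cf_digit x n = nat \<lfloor>1 / (gauss_map ^^ (n - 1)) x\<rfloor>"

definition oocf_D :: "(nat \<times> int) set" where
  "oocf_D = {(1, 1)} \<union> {(a, e). a \<ge> 2 \<and> (e = 1 \<or> e = -1)}"

text \<open>Cylinder intervals: B(k+1,-1) = [(k-1)/k, (2k-1)/(2k+1)], B(k,1) = [(2k-1)/(2k+1), k/(k+1)].\<close>
definition oocf_B :: "nat \<times> int \<Rightarrow> real set" where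
  "oocf_B d = (case d of (a, e) \<Rightarrow>
     (if e = -1 then {(real a - 2) / (real a - 1) .. (2 * real a - 3) / (2 * real a - 1)}
      else {(2 * real a - 1) / (2 * real a + 1) .. real a / (real a + 1)}))"

text \<open>The OOCF map T (branches agree at common endpoints).\<close>
definition oocf_T :: "real \<Rightarrow> real" where
  "oocf_T x =
    (if x = 1 then 1
     else if \<exists>k::nat. k \<ge> 1 \<and> x \<in> oocf_B (k + 1, -1) then
       (let k = real (SOME k::nat. k \<ge> 1 \<and> x \<in> oocf_B (k + 1, -1))
        in (k * x - (k - 1)) / (k - (k + 1) * x))
     else
       (let k = real (SOME k::nat. k \<ge> 1 \<and> x \<in> oocf_B (k, 1))
        in (k - (k + 1) * x) / (k * x - (k - 1))))"

text \<open>The OOCF expansion: the unique sequence of digits in D with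
  T^(n-1)(x) \<in> B(a_n, e_n) for all n \<ge> 1. Indexed from 0 here:
  oocf_expansion x n = (a_(n+1), e_(n+1)).\<close>
definition oocf_expansion :: "real \<Rightarrow> nat \<Rightarrow> nat \<times> int" where
  "oocf_expansion x =
     (THE s. \<forall>n. s n \<in> oocf_D \<and> (oocf_T ^^ n) x \<in> oocf_B (s n))"

end

theory Submission
  imports Defs
begin

text \<open>
  The cylinders of the OOCF map are consecutive intervals, so an irrational point lies in exactly one
  of them and its expansion is read off the orbit. On \<open>B(2,-1)\<close> the map is \<open>y \<mapsto> y / (1 - 2y)\<close>,
  i.e. it subtracts 2 from \<open>1/y\<close>; starting from \<open>1/x = d\<^sub>1 + G(x)\<close> this gives the run of digits
  \<open>(2,-1)\<close> and brings the orbit to \<open>1/(1 + G(x))\<close> (\<open>d\<^sub>1\<close> odd) or \<open>1/(2 + G(x))\<close> (\<open>d\<^sub>1\<close> even).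
  One more application of the Moebius branch containing that point yields \<open>F(\<tau>)\<close>, resp. \<open>G(x)\<close>.
\<close>

lemma moebius_irrational:
  fixes a b c d y :: real
  assumes "a \<in> \<rat>" "b \<in> \<rat>" "c \<in> \<rat>" "d \<in> \<rat>" "a * d \<noteq> b * c" "y \<notin> \<rat>"
  shows "(a * y + b) / (c * y + d) \<notin> \<rat>"
proof
  define q where "q = (a * y + b) / (c * y + d)"
  assume "q \<in> \<rat>"
  have den: "c * y + d \<noteq> 0"
  proof
    assume den0: "c * y + d = 0"
    show False
    proof (cases "c = 0")
      case True
      then show False using den0 assms(5) by simp
    next
      case False
      then have "y = - d / c" using den0 by (simp add: field_simps)
      then show False using assms(3,4,6) by simp
    qed
  qed
  have lin: "y * (q * c - a) = b - q * d"
    using den unfolding q_def by (simp add: field_simps)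
  have "q * c - a \<noteq> 0"
  proof
    assume "q * c - a = 0"
    then have "a = q * c" "b = q * d" using lin by simp_all
    then show False using assms(5) by simp
  qed
  then have "y = (b - q * d) / (q * c - a)" using lin by (simp add: field_simps)
  then show False using \<open>q \<in> \<rat>\<close> assms(1-4,6) by simp
qed

text \<open>
  Listed from left to right, the cylinders are the intervals \<open>[oocf_cut (n - 1), oocf_cut n]\<close>,
  \<open>n \<ge> 1\<close>; \<open>oocf_rank\<close> gives the position \<open>n\<close> of a digit and \<open>oocf_digit_of_rank\<close> inverts it.
\<close>

definition oocf_cut :: "nat \<Rightarrow> real" where
  "oocf_cut n = real n / (real n + 2)"

definition oocf_rank :: "nat \<times> int \<Rightarrow> nat" where
  "oocf_rank d = (case d of (a, e) \<Rightarrow> if e = -1 then 2 * a - 3 else 2 * a)"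

definition oocf_digit_of_rank :: "nat \<Rightarrow> nat \<times> int" where
  "oocf_digit_of_rank n = (if even n then (n div 2, 1) else ((n + 3) div 2, -1))"

lemma oocf_cut_rational: "oocf_cut n \<in> \<rat>"
  by (simp add: oocf_cut_def)

lemma oocf_cut_mono: "m \<le> n \<Longrightarrow> oocf_cut m \<le> oocf_cut n"
  by (simp add: oocf_cut_def field_simps)

lemma oocf_D_cases:
  assumes "d \<in> oocf_D"
  obtains "d = (1, 1)" | a where "a \<ge> 2" "d = (a, -1)" | a where "a \<ge> 2" "d = (a, 1)"
  using assms unfolding oocf_D_def by auto

lemma oocf_digit_of_rank_rank:
  assumes "d \<in> oocf_D"
  shows "oocf_digit_of_rank (oocf_rank d) = d"
  using assms
proof (cases rule: oocf_D_cases)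
  case (2 a)
  then have "odd (2 * a - 3)" "(2 * a - 3 + 3) div 2 = a" by presburger+
  then show ?thesis using 2 by (simp add: oocf_rank_def oocf_digit_of_rank_def)
qed (simp_all add: oocf_rank_def oocf_digit_of_rank_def)

lemma oocf_digit_of_rank_in_D:
  assumes "n \<ge> 1"
  shows "oocf_digit_of_rank n \<in> oocf_D" "oocf_rank (oocf_digit_of_rank n) = n"
proof -
  consider k where "k \<ge> 1" "n = 2 * k" | k where "n = 2 * k + 1"
    using assms by (cases "even n") (auto elim!: evenE oddE)
  then show "oocf_digit_of_rank n \<in> oocf_D" "oocf_rank (oocf_digit_of_rank n) = n"
    by cases (auto simp: oocf_rank_def oocf_digit_of_rank_def oocf_D_def)
qed

lemma oocf_rank_inj_on: "inj_on oocf_rank oocf_D"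
  by (metis inj_onI oocf_digit_of_rank_rank)

lemma oocf_B_eq_cut_interval:
  assumes "d \<in> oocf_D"
  shows "oocf_B d = {oocf_cut (oocf_rank d - 1) .. oocf_cut (oocf_rank d)}"
  using assms
proof (cases rule: oocf_D_cases)
  case 1
  then show ?thesis by (simp add: oocf_B_def oocf_rank_def oocf_cut_def)
next
  case (2 a)
  have "real (2 * a - 3) = 2 * real a - 3" "real (2 * a - 3 - 1) = 2 * real a - 4"
    using 2 by (simp_all add: of_nat_diff)
  moreover have "(real a - 2) / (real a - 1) = (2 * real a - 4) / (2 * real a - 4 + 2)"
    using 2 by (simp add: field_simps)
  ultimately show ?thesis using 2 by (simp add: oocf_B_def oocf_rank_def oocf_cut_def)
next
  case (3 a)
  have "real (2 * a - 1) = 2 * real a - 1" using 3 by (simp add: of_nat_diff)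
  moreover have "real a / (real a + 1) = (2 * real a) / (2 * real a + 2)"
    using 3 by (simp add: field_simps)
  ultimately show ?thesis using 3 by (simp add: oocf_B_def oocf_rank_def oocf_cut_def)
qed

lemma oocf_B_unique:
  assumes "y \<notin> \<rat>" "d \<in> oocf_D" "d' \<in> oocf_D" "y \<in> oocf_B d" "y \<in> oocf_B d'"
  shows "d = d'"
proof -
  have between: "oocf_cut (oocf_rank e - 1) < y \<and> y < oocf_cut (oocf_rank e)"
    if "e \<in> oocf_D" "y \<in> oocf_B e" for e
    using that oocf_B_eq_cut_interval[OF that(1)] oocf_cut_rational assms(1)
    by (metis atLeastAtMost_iff order_le_less)
  have "\<not> oocf_rank e < oocf_rank e'"
    if "e \<in> oocf_D" "e' \<in> oocf_D" "y \<in> oocf_B e" "y \<in> oocf_B e'" for e e'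
  proof
    assume "oocf_rank e < oocf_rank e'"
    then have "oocf_cut (oocf_rank e) \<le> oocf_cut (oocf_rank e' - 1)"
      by (intro oocf_cut_mono) simp
    then show False using between[OF that(1,3)] between[OF that(2,4)] by linarith
  qed
  then have "oocf_rank d = oocf_rank d'" using assms(2-5) by (meson linorder_neqE_nat)
  then show ?thesis using oocf_rank_inj_on assms(2,3) by (simp add: inj_on_eq_iff)
qed

lemma oocf_B_exists:
  assumes "0 < y" "y < 1"
  obtains d where "d \<in> oocf_D" "y \<in> oocf_B d"
proof -
  define n where "n = nat \<lfloor>2 * y / (1 - y)\<rfloor>"
  have "real n \<le> 2 * y / (1 - y)" "2 * y / (1 - y) < real n + 1"
    using assms unfolding n_def by (simp_all add: of_nat_nat)
  then have "oocf_cut n \<le> y" "y \<le> oocf_cut (n + 1)"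
    using assms by (simp_all add: oocf_cut_def field_simps)
  then show thesis
    using that[of "oocf_digit_of_rank (n + 1)"] oocf_digit_of_rank_in_D[of "n + 1"]
      oocf_B_eq_cut_interval[of "oocf_digit_of_rank (n + 1)"] by simp
qed

lemma oocf_D_minus_iff: "(a, -1) \<in> oocf_D \<longleftrightarrow> a \<ge> 2"
  and oocf_D_plus_iff: "(a, 1) \<in> oocf_D \<longleftrightarrow> a \<ge> 1"
  by (auto simp: oocf_D_def)

lemma oocf_B_minus:
  "oocf_B (k + 1, -1) = {(real k - 1) / real k .. (2 * real k - 1) / (2 * real k + 1)}"
  by (simp add: oocf_B_def algebra_simps)

lemma oocf_T_minus:
  assumes "k \<ge> 1" "y \<notin> \<rat>" "y \<in> oocf_B (k + 1, -1)"
  shows "oocf_T y = (real k * y - (real k - 1)) / (real k - (real k + 1) * y)"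
proof -
  have "(SOME k. k \<ge> 1 \<and> y \<in> oocf_B (k + 1, -1)) = k"
  proof (rule some_equality)
    fix k' :: nat
    assume k': "k' \<ge> 1 \<and> y \<in> oocf_B (k' + 1, -1)"
    have "(k' + 1, -1) = (k + 1, -1 :: int)"
      by (rule oocf_B_unique[OF assms(2)]) (use k' assms in \<open>simp_all add: oocf_D_minus_iff\<close>)
    then show "k' = k" by simp
  qed (use assms in blast)
  moreover have "\<exists>k::nat. k \<ge> 1 \<and> y \<in> oocf_B (k + 1, -1)" using assms(1,3) by blast
  moreover have "y \<noteq> 1" using assms(2) by auto
  ultimately show ?thesis unfolding oocf_T_def by (simp add: Let_def)
qed

lemma oocf_T_plus:
  assumes "k \<ge> 1" "y \<notin> \<rat>" "y \<in> oocf_B (k, 1)"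
  shows "oocf_T y = (real k - (real k + 1) * y) / (real k * y - (real k - 1))"
proof -
  have "\<not> (\<exists>k'::nat. k' \<ge> 1 \<and> y \<in> oocf_B (k' + 1, -1))"
  proof
    assume "\<exists>k'::nat. k' \<ge> 1 \<and> y \<in> oocf_B (k' + 1, -1)"
    then obtain k' :: nat where k': "k' \<ge> 1" "y \<in> oocf_B (k' + 1, -1)" by blast
    have "(k' + 1, -1) = (k, 1 :: int)"
      by (rule oocf_B_unique[OF assms(2)])
        (use k' assms in \<open>simp_all add: oocf_D_minus_iff oocf_D_plus_iff\<close>)
    then show False by simp
  qed
  moreover have "(SOME k. k \<ge> 1 \<and> y \<in> oocf_B (k, 1)) = k"
  proof (rule some_equality)
    fix k' :: nat
    assume k': "k' \<ge> 1 \<and> y \<in> oocf_B (k', 1)"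
    have "(k', 1) = (k, 1 :: int)"
      by (rule oocf_B_unique[OF assms(2)]) (use k' assms in \<open>simp_all add: oocf_D_plus_iff\<close>)
    then show "k' = k" by simp
  qed (use assms in blast)
  moreover have "y \<noteq> 1" using assms(2) by auto
  ultimately show ?thesis unfolding oocf_T_def by (simp only: if_False Let_def)
qed

lemma oocf_T_minus_unit_irrational:
  assumes "k \<ge> 1" "y \<notin> \<rat>" "y \<in> oocf_B (k + 1, -1)"
  shows "oocf_T y \<in> {0 <..< 1} - \<rat>"
proof -
  define r where "r = real k"
  have r: "r \<ge> 1" "r \<in> \<rat>" using assms(1) unfolding r_def by simp_all
  have y: "(r - 1) / r \<le> y" "(2 * r + 1) * y \<le> 2 * r - 1"
    using assms(3) r(1) unfolding oocf_B_minus r_def[symmetric] by (simp_all add: field_simps)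
  have num: "0 \<le> r * y - (r - 1)" using y(1) r(1) by (simp add: field_simps)
  have "y < 1"
  proof (rule ccontr)
    assume "\<not> y < 1"
    then have "(2 * r + 1) * 1 \<le> (2 * r + 1) * y" using r(1) by (intro mult_left_mono) auto
    then show False using y(2) by simp
  qed
  then have den: "0 < r - (r + 1) * y" using y(2) by (simp add: algebra_simps)
  have le: "r * y - (r - 1) \<le> r - (r + 1) * y" using y(2) by (simp add: algebra_simps)
  have "(r * y + -(r - 1)) / (- (r + 1) * y + r) \<notin> \<rat>"
    using r assms(2) by (intro moebius_irrational) (simp_all add: algebra_simps)
  then have "oocf_T y \<notin> \<rat>"
    using oocf_T_minus[OF assms] unfolding r_def[symmetric] by (simp add: algebra_simps)
  moreover have "0 \<le> oocf_T y" "oocf_T y \<le> 1"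
    using oocf_T_minus[OF assms] num den le unfolding r_def[symmetric] by simp_all
  moreover have "oocf_T y \<noteq> 0" "oocf_T y \<noteq> 1" using calculation(1) Rats_0 Rats_1 by auto
  ultimately show ?thesis by simp
qed

lemma oocf_T_plus_unit_irrational:
  assumes "k \<ge> 1" "y \<notin> \<rat>" "y \<in> oocf_B (k, 1)"
  shows "oocf_T y \<in> {0 <..< 1} - \<rat>"
proof -
  define r where "r = real k"
  have r: "r \<ge> 1" "r \<in> \<rat>" using assms(1) unfolding r_def by simp_all
  have y: "2 * r - 1 \<le> (2 * r + 1) * y" "(r + 1) * y \<le> r"
    using assms(3) r(1) unfolding oocf_B_def r_def by (simp_all add: field_simps)
  have num: "0 \<le> r - (r + 1) * y" using y(2) by simp
  have "r * (2 * r - 1) \<le> r * ((2 * r + 1) * y)" using y(1) r(1) by (intro mult_left_mono) auto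
  moreover have "(2 * r + 1) * (r * y - (r - 1)) = r * ((2 * r + 1) * y) - (2 * r + 1) * (r - 1)"
    "r * (2 * r - 1) - (2 * r + 1) * (r - 1) = 1"
    by (simp_all add: algebra_simps)
  ultimately have "0 < (2 * r + 1) * (r * y - (r - 1))" by linarith
  then have den: "0 < r * y - (r - 1)" using r(1) by (simp add: zero_less_mult_iff)
  have le: "r - (r + 1) * y \<le> r * y - (r - 1)" using y(1) by (simp add: algebra_simps)
  have "(- (r + 1) * y + r) / (r * y + -(r - 1)) \<notin> \<rat>"
    using r assms(2) by (intro moebius_irrational) (simp_all add: algebra_simps)
  then have "oocf_T y \<notin> \<rat>"
    using oocf_T_plus[OF assms] unfolding r_def[symmetric] by (simp add: algebra_simps)
  moreover have "0 \<le> oocf_T y" "oocf_T y \<le> 1"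
    using oocf_T_plus[OF assms] num den le unfolding r_def[symmetric] by simp_all
  moreover have "oocf_T y \<noteq> 0" "oocf_T y \<noteq> 1" using calculation(1) Rats_0 Rats_1 by auto
  ultimately show ?thesis by simp
qed

lemma oocf_T_unit_irrational:
  assumes "y \<in> {0 <..< 1} - \<rat>"
  shows "oocf_T y \<in> {0 <..< 1} - \<rat>"
proof -
  obtain d where d: "d \<in> oocf_D" "y \<in> oocf_B d" using oocf_B_exists assms by auto
  have y: "y \<notin> \<rat>" using assms by simp
  from d(1) show ?thesis
  proof (cases rule: oocf_D_cases)
    case 1
    then show ?thesis using oocf_T_plus_unit_irrational[of 1 y] d(2) y by simp
  next
    case (2 a)
    then have "y \<in> oocf_B ((a - 1) + 1, -1)" using d(2) by simp
    then show ?thesis using oocf_T_minus_unit_irrational[of "a - 1" y] 2 y by simp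
  next
    case (3 a)
    then show ?thesis using oocf_T_plus_unit_irrational[of a y] d(2) y by simp
  qed
qed

lemma oocf_T_iter_unit_irrational:
  "x \<in> {0 <..< 1} - \<rat> \<Longrightarrow> (oocf_T ^^ n) x \<in> {0 <..< 1} - \<rat>"
proof (induction n)
  case (Suc n)
  then show ?case using oocf_T_unit_irrational[OF Suc.IH] by simp
qed simp

lemma oocf_expansion_eqI:
  assumes x: "x \<in> {0 <..< 1} - \<rat>" and "d \<in> oocf_D" "(oocf_T ^^ j) x \<in> oocf_B d"
  shows "oocf_expansion x j = d"
proof -
  have orbit: "(oocf_T ^^ n) x \<in> {0 <..< 1} - \<rat>" for n
    using oocf_T_iter_unit_irrational[OF x] .
  define s where "s n = (SOME d. d \<in> oocf_D \<and> (oocf_T ^^ n) x \<in> oocf_B d)" for n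
  have s: "s n \<in> oocf_D \<and> (oocf_T ^^ n) x \<in> oocf_B (s n)" for n
    unfolding s_def using oocf_B_exists[of "(oocf_T ^^ n) x"] orbit[of n]
    by (metis (mono_tags, lifting) Diff_iff greaterThanLessThan_iff someI_ex)
  have "oocf_expansion x = s"
    unfolding oocf_expansion_def
  proof (rule the_equality)
    fix t
    assume "\<forall>n. t n \<in> oocf_D \<and> (oocf_T ^^ n) x \<in> oocf_B (t n)"
    then show "t = s" using oocf_B_unique orbit s by blast
  qed (use s in blast)
  then show ?thesis using oocf_B_unique orbit s assms(2,3) by blast
qed

lemma oocf_T_iter_two_minus:
  assumes x: "x \<in> {0 <..< 1} - \<rat>" and "2 * real j + 1 < 1 / x"
  shows "(oocf_T ^^ j) x = 1 / (1 / x - 2 * real j)"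
  using assms(2)
proof (induction j)
  case (Suc j)
  define w where "w = 1 / x - 2 * real j"
  have w: "w > 3" using Suc.prems unfolding w_def by simp
  have "(oocf_T ^^ j) x = 1 / w" using Suc unfolding w_def by simp
  moreover have "1 / w \<in> oocf_B (1 + 1, -1)" using w by (simp add: oocf_B_def field_simps)
  moreover have "1 / w \<notin> \<rat>"
    using oocf_T_iter_unit_irrational[OF x, of j] calculation(1) by simp
  ultimately have "(oocf_T ^^ Suc j) x = (1 * (1 / w) - (1 - 1)) / (1 - (1 + 1) * (1 / w))"
    using oocf_T_minus[of 1 "1 / w"] by simp
  also have "\<dots> = 1 / (w - 2)" using w by (simp add: field_simps)
  finally show ?case unfolding w_def by (simp add: algebra_simps)
qed simp

lemma oocf_expansion_initial_twos:
  assumes x: "x \<in> {0 <..< 1} - \<rat>" and "2 * real m + 1 < 1 / x"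
  shows "\<forall>j < m. oocf_expansion x j = (2, -1)" "(oocf_T ^^ m) x = 1 / (1 / x - 2 * real m)"
proof -
  show "(oocf_T ^^ m) x = 1 / (1 / x - 2 * real m)" using oocf_T_iter_two_minus assms .
  show "\<forall>j < m. oocf_expansion x j = (2, -1)"
  proof (intro allI impI)
    fix j
    assume "j < m"
    then have w: "1 / x - 2 * real j > 3" using assms(2) by linarith
    then have "(oocf_T ^^ j) x = 1 / (1 / x - 2 * real j)" using oocf_T_iter_two_minus[OF x] by simp
    moreover have "1 / (1 / x - 2 * real j) \<in> oocf_B (2, -1)"
      using w by (simp add: oocf_B_def field_simps)
    ultimately show "oocf_expansion x j = (2, -1)"
      using oocf_expansion_eqI[OF x] by (simp add: oocf_D_minus_iff)
  qed
qed

lemma gauss_map_unit_irrational: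
  assumes "x \<in> {0 <..< 1} - \<rat>"
  shows "1 / x = real (cf_digit x 1) + gauss_map x" "cf_digit x 1 \<ge> 1"
    "gauss_map x \<in> {0 <..< 1} - \<rat>"
proof -
  have x: "0 < x" "x < 1" "x \<notin> \<rat>" using assms by auto
  have inv_x: "1 / x \<notin> \<rat>" using x(3) by (metis Rats_inverse inverse_eq_divide inverse_inverse_eq)
  have "\<lfloor>1 / x\<rfloor> \<ge> 1" using x by simp
  then have floor: "real (cf_digit x 1) = \<lfloor>1 / x\<rfloor>" "\<lfloor>1 / x\<rfloor> \<ge> 1"
    by (simp_all add: cf_digit_def of_nat_nat del: one_le_floor)
  have g: "gauss_map x = 1 / x - \<lfloor>1 / x\<rfloor>" using x(1) by (simp add: gauss_map_def frac_def)
  then show "1 / x = real (cf_digit x 1) + gauss_map x" using floor by simp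
  show "cf_digit x 1 \<ge> 1" using floor by linarith
  have "gauss_map x \<notin> \<rat>"
  proof
    assume "gauss_map x \<in> \<rat>"
    then have "gauss_map x + \<lfloor>1 / x\<rfloor> \<in> \<rat>" by simp
    then show False using g inv_x by simp
  qed
  moreover have "0 \<le> gauss_map x" "gauss_map x < 1" using x(1) by (simp_all add: gauss_map_def frac_lt_1)
  moreover have "gauss_map x \<noteq> 0" using calculation(1) by auto
  ultimately show "gauss_map x \<in> {0 <..< 1} - \<rat>" by simp
qed

lemma cf_digit_Suc_Suc: "cf_digit x (Suc (Suc n)) = cf_digit (gauss_map x) (Suc n)"
  by (simp add: cf_digit_def funpow_swap1)

lemma oocf_T_farey_step:
  assumes "D \<ge> 1" and t: "t \<in> {0 <..< 1} - \<rat>"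
  defines "y \<equiv> (real D + t) / (real D + t + 1)"
  shows "1 / 2 < t \<Longrightarrow> y \<in> oocf_B (D + 1, 1) \<and> oocf_T y = farey_map t"
    and "t < 1 / 2 \<Longrightarrow> y \<in> oocf_B (D + 2, -1) \<and> oocf_T y = farey_map t"
proof -
  have t01: "0 < t" "t < 1" and "t \<notin> \<rat>" using t by auto
  have pos: "real D + t + 1 > 0" using t01 by simp
  have "(1 * t + real D) / (1 * t + (real D + 1)) \<notin> \<rat>"
    using \<open>t \<notin> \<rat>\<close> by (intro moebius_irrational) simp_all
  then have y_irr: "y \<notin> \<rat>" unfolding y_def by (simp add: add.commute add.left_commute)
  have num: "real (D + 1) - (real (D + 1) + 1) * y = (1 - t) / (real D + t + 1)"
    and den: "real (D + 1) * y - (real (D + 1) - 1) = t / (real D + t + 1)"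
    using pos unfolding y_def by (simp_all add: field_simps)
  show "y \<in> oocf_B (D + 1, 1) \<and> oocf_T y = farey_map t" if "1 / 2 < t"
  proof
    show yB: "y \<in> oocf_B (D + 1, 1)"
      using that t01 assms(1) unfolding y_def by (simp add: oocf_B_def field_simps)
    have "oocf_T y = (real (D + 1) - (real (D + 1) + 1) * y) / (real (D + 1) * y - (real (D + 1) - 1))"
      using oocf_T_plus[OF _ y_irr yB] by simp
    also have "\<dots> = (1 - t) / t" unfolding num den using pos by simp
    finally show "oocf_T y = farey_map t" using that by (simp add: farey_map_def)
  qed
  show "y \<in> oocf_B (D + 2, -1) \<and> oocf_T y = farey_map t" if "t < 1 / 2"
  proof
    show yB: "y \<in> oocf_B (D + 2, -1)"
      using that t01 assms(1) unfolding y_def by (simp add: oocf_B_def field_simps)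
    have "oocf_T y = (real (D + 1) * y - (real (D + 1) - 1)) / (real (D + 1) - (real (D + 1) + 1) * y)"
      using oocf_T_minus[of "D + 1", OF _ y_irr] yB by (simp add: add.assoc)
    also have "\<dots> = t / (1 - t)" unfolding num den using pos by simp
    finally show "oocf_T y = farey_map t" using that by (simp add: farey_map_def)
  qed
qed

lemma oocf_T_gauss_step:
  assumes g: "g \<in> {0 <..< 1} - \<rat>"
  shows "1 / (2 + g) \<in> oocf_B (1, 1)" "oocf_T (1 / (2 + g)) = g"
proof -
  have g01: "0 < g" "g < 1" using g by auto
  show yB: "1 / (2 + g) \<in> oocf_B (1, 1)" using g01 by (simp add: oocf_B_def field_simps)
  have "(0 * g + 1) / (1 * g + 2) \<notin> \<rat>" using g by (intro moebius_irrational) auto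
  then have "1 / (2 + g) \<notin> \<rat>" by (simp add: add.commute)
  then have "oocf_T (1 / (2 + g)) = (1 - 2 * (1 / (2 + g))) / (1 / (2 + g))"
    using oocf_T_plus[of 1, OF _ _ yB] by simp
  also have "\<dots> = g" using g01 by (simp add: field_simps)
  finally show "oocf_T (1 / (2 + g)) = g" .
qed

lemma oocf_expansion_odd_first_digit:
  assumes x: "x \<in> {0 <..< 1} - \<rat>" and t: "t \<in> {0 <..< 1} - \<rat>" and "D \<ge> 1"
    and inv_x: "1 / x = 2 * real m + 1 + 1 / (real D + t)"
  shows "\<forall>j < m. oocf_expansion x j = (2, -1)"
    "1 / 2 \<le> t \<Longrightarrow> oocf_expansion x m = (D + 1, 1)"
    "t < 1 / 2 \<Longrightarrow> oocf_expansion x m = (D + 2, -1)"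
    "(oocf_T ^^ (m + 1)) x = farey_map t"
proof -
  have t01: "0 < t" "t < 1" using t by auto
  have "2 * real m + 1 < 1 / x" using inv_x t01 assms(3) by simp
  note twos = oocf_expansion_initial_twos[OF x this]
  show "\<forall>j < m. oocf_expansion x j = (2, -1)" using twos(1) .
  have "1 / (1 + 1 / (real D + t)) = (real D + t) / (real D + t + 1)"
    using t01 assms(3) by (simp add: field_simps)
  then have y: "(oocf_T ^^ m) x = (real D + t) / (real D + t + 1)" using twos(2) inv_x by simp
  have "(1 / 2 :: real) \<in> \<rat>" by simp
  then have "t \<noteq> 1 / 2" using t by (metis Diff_iff)
  note step = oocf_T_farey_step[OF assms(3) t, folded y]
  show "oocf_expansion x m = (D + 1, 1)" if "1 / 2 \<le> t"
    using step(1) \<open>t \<noteq> 1 / 2\<close> that oocf_expansion_eqI[OF x] assms(3)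
    by (simp add: oocf_D_plus_iff)
  show "oocf_expansion x m = (D + 2, -1)" if "t < 1 / 2"
    using step(2) that oocf_expansion_eqI[OF x] by (simp add: oocf_D_minus_iff)
  show "(oocf_T ^^ (m + 1)) x = farey_map t"
    using step \<open>t \<noteq> 1 / 2\<close> y by (cases "t < 1 / 2") simp_all
qed

lemma oocf_expansion_even_first_digit:
  assumes x: "x \<in> {0 <..< 1} - \<rat>" and g: "g \<in> {0 <..< 1} - \<rat>"
    and inv_x: "1 / x = 2 * real m + 2 + g"
  shows "\<forall>j < m. oocf_expansion x j = (2, -1)" "oocf_expansion x m = (1, 1)"
    "(oocf_T ^^ (m + 1)) x = g"
proof -
  have "2 * real m + 1 < 1 / x" using inv_x g by simp
  note twos = oocf_expansion_initial_twos[OF x this]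
  show "\<forall>j < m. oocf_expansion x j = (2, -1)" using twos(1) .
  have y: "(oocf_T ^^ m) x = 1 / (2 + g)" using twos(2) inv_x by simp
  show "oocf_expansion x m = (1, 1)"
    using oocf_expansion_eqI[OF x] oocf_T_gauss_step(1)[OF g] y by (simp add: oocf_D_plus_iff)
  show "(oocf_T ^^ (m + 1)) x = g" using oocf_T_gauss_step(2)[OF g] y by simp
qed

theorem theorem5p3:
  fixes x :: real
  assumes "0 < x" and "x < 1" and "x \<notin> \<rat>"
  shows
   "(odd (cf_digit x 1) \<and> (gauss_map ^^ 2) x \<in> {1/2 ..< 1} \<longrightarrow>
       (\<forall>j < (cf_digit x 1 - 1) div 2. oocf_expansion x j = (2, -1)) \<and>
       oocf_expansion x ((cf_digit x 1 - 1) div 2) = (cf_digit x 2 + 1, 1) \<and>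
       (oocf_T ^^ ((cf_digit x 1 - 1) div 2 + 1)) x = farey_map ((gauss_map ^^ 2) x))
  \<and> (odd (cf_digit x 1) \<and> (gauss_map ^^ 2) x \<in> {0 ..< 1/2} \<longrightarrow>
       (\<forall>j < (cf_digit x 1 - 1) div 2. oocf_expansion x j = (2, -1)) \<and>
       oocf_expansion x ((cf_digit x 1 - 1) div 2) = (cf_digit x 2 + 2, -1) \<and>
       (oocf_T ^^ ((cf_digit x 1 - 1) div 2 + 1)) x = farey_map ((gauss_map ^^ 2) x))
  \<and> (even (cf_digit x 1) \<longrightarrow>
       (\<forall>j < cf_digit x 1 div 2 - 1. oocf_expansion x j = (2, -1)) \<and>
       oocf_expansion x (cf_digit x 1 div 2 - 1) = (1, 1) \<and>
       (oocf_T ^^ (cf_digit x 1 div 2)) x = gauss_map x)"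
proof -
  have x: "x \<in> {0 <..< 1} - \<rat>" using assms by simp
  define g where "g = gauss_map x"
  note gx = gauss_map_unit_irrational[OF x, folded g_def]
  note gg = gauss_map_unit_irrational[OF gx(3)]
  have d2: "cf_digit x 2 = cf_digit g 1" and t: "(gauss_map ^^ 2) x = gauss_map g"
    unfolding g_def by (simp_all add: numeral_2_eq_2 cf_digit_Suc_Suc funpow_swap1)
  have "g = 1 / (1 / g)" by simp
  also have "\<dots> = 1 / (real (cf_digit g 1) + gauss_map g)" using gg(1) by simp
  finally have inv_g: "g = 1 / (real (cf_digit g 1) + gauss_map g)" .
  have odd_case: "1 / x = 2 * real m + 1 + 1 / (real (cf_digit g 1) + gauss_map g)"
    if "cf_digit x 1 = 2 * m + 1" for m
    using gx(1) inv_g that by simp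
  have even_case: "1 / x = 2 * real m + 2 + g" if "cf_digit x 1 = 2 * m + 2" for m
    using gx(1) that by simp
  have "(\<exists>m. cf_digit x 1 = 2 * m + 1) \<or> (\<exists>m. cf_digit x 1 = 2 * m + 2)"
    using gx(2) by presburger
  then show ?thesis
  proof (elim disjE exE)
    fix m
    assume "cf_digit x 1 = 2 * m + 1"
    then show ?thesis
      unfolding d2 t using oocf_expansion_odd_first_digit[OF x gg(3) gg(2) odd_case] by simp
  next
    fix m
    assume "cf_digit x 1 = 2 * m + 2"
    then show ?thesis
      unfolding d2 t g_def[symmetric] using oocf_expansion_even_first_digit[OF x gx(3) even_case] by simp
  qed
qed

end
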